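(* Let $K\ge1$, $\Delta_0,B>0$, and for $k=1,\dots,K$ let $m_k\ge0$, $v_k\ge0$. Let $\mathcal{G}\subset\mathbb{R}^K$ be the set of $\mathbf{r}$ for which there exist $\mathbf{p},\mathbf{y}\in\mathbb{R}^K$ and a $2K\times2K$ real matrix $\mathbf{H}=\begin{bmatrix}\mathbf{H}^{xx}&\mathbf{H}^{x\phi}\\(\mathbf{H}^{x\phi})^{\rm T}&\mathbf{H}^{\phi\phi}\end{bmatrix}$ satisfying: $r_k\ge0$; $r_k\le\Delta_0B\,p_k\log_2(1+y_k/p_k)$; $0\le p_k\le1$; $\sum_kp_k\le1$; $H^{x\phi}_{k,k}=y_k-p_km_k$; $H^{\phi\phi}_{k,k}=v_k$ and $H^{\phi\phi}_{i,j}=0$ for $i\neq j$; $H^{xx}_{k,k}\le p_k-p_k^2$; $\sum_{i,j}H^{xx}_{i,j}\le\sum_ip_i-(\sum_ip_i)^2$; $\mathbf{H}\succeq0$ (all for every $k$). Let $f(\mathbf{r})=\sum_k\ln r_k$ and $\mathbf{r}^*=\arg\max_{\mathbf{r}\in\mathcal{G}}f(\mathbf{r})$. Consider the iteration (Algorithm 1) with tolerance $\hat\epsilon>0$: $\mathbf{w}^{(1)}=[1/\sqrt K,\dots,1/\sqrt K]^{\rm T}$; at iteration $i$, $\mathbf{r}^{(i)}=\arg\max_{\mathbf{r}\in\mathcal{G}}\langle\mathbf{w}^{(i)},\mathbf{r}\rangle$; if $|\langle\mathbf{w}^{(i)},\mathbf{r}^{(i)}-\mathbf{r}^*\rangle|<\hat\epsilon$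 the algorithm terminates, otherwise it sets $$a^{(i)}=\frac{\|\mathbf{r}^*-\mathbf{r}^{(i)}\|_2^2}{\langle\mathbf{w}^{(i)},\mathbf{r}^{(i)}-\mathbf{r}^*\rangle},\quad b^{(i)}=-\min_k\frac{r^*_k-r^{(i)}_k}{w^{(i)}_k},\quad \mathbf{u}^{(i)}=a^{(i)}\mathbf{w}^{(i)}+(\mathbf{r}^*-\mathbf{r}^{(i)})+b^{(i)}\mathbf{w}^{(i)},\quad \mathbf{w}^{(i+1)}=\frac{\mathbf{u}^{(i)}}{\|\mathbf{u}^{(i)}\|_2}.$$ If $\mathbf{w}^{(i)}>0$ and $\|\mathbf{w}^{(i)}\|_2=1$, then $\mathbf{w}^{(i+1)}>0$ and $\|\mathbf{w}^{(i+1)}\|_2=1$.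
   Context: $\langle\cdot,\cdot\rangle$ is the Euclidean inner product; vector inequalities $>0$ are componentwise strict; $\mathbf{H}\succeq0$ means positive semidefinite; $p\log_2(1+y/p)$ is understood as its perspective (value $0$ at $p=0$). $\mathbf{w}^{(i+1)}$ is only computed when iteration $i$ does not terminate. *)

theory Defs
  imports "HOL-Analysis.Analysis" "HOL-Library.Extended_Real"
begin

text \<open>Rate constraint r \<le> Delta0 B p log2(1 + y/p), with the perspective convention:
  value 0 at p = 0; for p > 0 the logarithm must be defined (1 + y/p > 0).\<close>
definition rate_ok :: "real \<Rightarrow> real \<Rightarrow> real \<Rightarrow> real \<Rightarrow> real \<Rightarrow> bool" where
  "rate_ok D0 B p y r \<longleftrightarrow>
     (p = 0 \<and> r \<le> 0) \<or>
     (p > 0 \<and> 1 + y / p > 0 \<and> r \<le> D0 * B * (p * log 2 (1 + y / p)))"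

definition psd :: "real^'n^'n \<Rightarrow> bool" where
  "psd H \<longleftrightarrow> transpose H = H \<and> (\<forall>x. 0 \<le> x \<bullet> (H *v x))"

text \<open>The feasible set G.  The 2K x 2K matrix H is indexed by 'k + 'k:
  Inl i is the x-block, Inr i the phi-block.\<close>
definition feasible_set ::
  "real \<Rightarrow> real \<Rightarrow> real^'k \<Rightarrow> real^'k \<Rightarrow> (real^'k) set" where
  "feasible_set D0 B m v = {r. \<exists>(p::real^'k) (y::real^'k) (H::real^('k+'k)^('k+'k)).
      (\<forall>k. 0 \<le> r$k) \<and>
      (\<forall>k. rate_ok D0 B (p$k) (y$k) (r$k)) \<and>
      (\<forall>k. 0 \<le> p$k \<and> p$k \<le> 1) \<and>
      (\<Sum>k\<in>UNIV. p$k) \<le> 1 \<and>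
      (\<forall>k. H$Inl k$Inr k = y$k - p$k * m$k) \<and>
      (\<forall>k. H$Inr k$Inr k = v$k) \<and>
      (\<forall>i j. i \<noteq> j \<longrightarrow> H$Inr i$Inr j = 0) \<and>
      (\<forall>k. H$Inl k$Inl k \<le> p$k - (p$k)^2) \<and>
      (\<Sum>i\<in>UNIV. \<Sum>j\<in>UNIV. H$Inl i$Inl j) \<le> (\<Sum>i\<in>UNIV. p$i) - (\<Sum>i\<in>UNIV. p$i)^2 \<and>
      psd H}"

definition lnE :: "real \<Rightarrow> ereal" where
  "lnE x = (if x > 0 then ereal (ln x) else -\<infinity>)"

definition utility :: "real^'k \<Rightarrow> ereal" where
  "utility r = (\<Sum>k\<in>UNIV. lnE (r$k))"

definition alg_a :: "real^'k \<Rightarrow> real^'k \<Rightarrow> real^'k \<Rightarrow> real" where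
  "alg_a w r rs = (norm (rs - r))^2 / (w \<bullet> (r - rs))"

definition alg_b :: "real^'k \<Rightarrow> real^'k \<Rightarrow> real^'k \<Rightarrow> real" where
  "alg_b w r rs = - Min (range (\<lambda>k. (rs$k - r$k) / w$k))"

definition alg_u :: "real^'k \<Rightarrow> real^'k \<Rightarrow> real^'k \<Rightarrow> real^'k" where
  "alg_u w r rs = alg_a w r rs *\<^sub>R w + (rs - r) + alg_b w r rs *\<^sub>R w"

definition alg_next :: "real^'k \<Rightarrow> real^'k \<Rightarrow> real^'k \<Rightarrow> real^'k" where
  "alg_next w r rs = (1 / norm (alg_u w r rs)) *\<^sub>R alg_u w r rs"

end

theory Submission
  imports Defs
begin

text \<open>Since r(i) maximises the linear functional given by w(i) over a set containing the
  feasible point r*, a non-terminating iteration has w(i) . (r(i) - r*) > 0, hence a(i) > 0.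
  The shift b(i) is chosen exactly so that b(i) w(i) + (r* - r(i)) is componentwise
  nonnegative; adding the positive vector a(i) w(i) makes u(i) strictly positive, and
  normalising keeps the signs.\<close>

lemma alg_a_pos:
  assumes "w \<bullet> (r - rs) > 0"
  shows "alg_a w r rs > 0"
proof -
  have "r - rs \<noteq> 0" using assms by auto
  then show ?thesis using assms unfolding alg_a_def by simp
qed

lemma alg_b_mult_ge:
  fixes w r rs :: "real^'k"
  assumes "w $ k > 0"
  shows "r $ k - rs $ k \<le> alg_b w r rs * w $ k"
proof -
  have "Min (range (\<lambda>j. (rs $ j - r $ j) / w $ j)) \<le> (rs $ k - r $ k) / w $ k"
    by (intro Min_le) auto
  moreover have "(r $ k - rs $ k) / w $ k = - ((rs $ k - r $ k) / w $ k)"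
    by (simp add: divide_simps)
  ultimately have "(r $ k - rs $ k) / w $ k \<le> alg_b w r rs"
    unfolding alg_b_def by linarith
  then show ?thesis using assms by (simp add: pos_divide_le_eq)
qed

lemma alg_u_pos:
  fixes w r rs :: "real^'k"
  assumes "\<forall>j. w $ j > 0" and "w \<bullet> (r - rs) > 0"
  shows "alg_u w r rs $ k > 0"
proof -
  have "alg_a w r rs * w $ k > 0"
    using alg_a_pos[OF assms(2)] assms(1) by simp
  moreover have "r $ k - rs $ k \<le> alg_b w r rs * w $ k"
    using alg_b_mult_ge assms(1) by blast
  ultimately show ?thesis unfolding alg_u_def by simp
qed

lemma normalize_pos_unit:
  fixes u :: "real^'k"
  assumes "\<forall>j. u $ j > 0"
  shows "(\<forall>k. ((1 / norm u) *\<^sub>R u) $ k > 0) \<and> norm ((1 / norm u) *\<^sub>R u) = 1"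
proof -
  have "u \<noteq> 0" using assms by (metis less_irrefl zero_index)
  then show ?thesis using assms by simp
qed

lemma alg_next_pos_unit:
  fixes w r rs :: "real^'k"
  assumes "\<forall>j. w $ j > 0" and "w \<bullet> (r - rs) > 0"
  shows "(\<forall>k. alg_next w r rs $ k > 0) \<and> norm (alg_next w r rs) = 1"
  using normalize_pos_unit alg_u_pos[OF assms] unfolding alg_next_def by blast

theorem corollary3:
  fixes D0 B eps :: real and m v rs :: "real^'k"
    and w r :: "nat \<Rightarrow> real^'k" and i :: nat
  assumes "D0 > 0" and "B > 0" and "eps > 0"
    and "\<forall>k. m$k \<ge> 0" and "\<forall>k. v$k \<ge> 0"
    and rs_opt: "rs \<in> feasible_set D0 B m v"
        "\<forall>r'\<in>feasible_set D0 B m v. utility r' \<le> utility rs"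
    and w1: "w 1 = (\<chi> k. 1 / sqrt (real CARD('k)))"
    and r_opt: "\<forall>j\<ge>1. r j \<in> feasible_set D0 B m v \<and>
                   (\<forall>r'\<in>feasible_set D0 B m v. w j \<bullet> r' \<le> w j \<bullet> r j)"
    and step: "\<forall>j\<ge>1. \<bar>w j \<bullet> (r j - rs)\<bar> \<ge> eps \<longrightarrow> w (Suc j) = alg_next (w j) (r j) rs"
    and "i \<ge> 1"
    and noterm: "\<bar>w i \<bullet> (r i - rs)\<bar> \<ge> eps"
    and "\<forall>k. w i $ k > 0" and "norm (w i) = 1"
  shows "(\<forall>k. w (Suc i) $ k > 0) \<and> norm (w (Suc i)) = 1"
proof -
  have "w i \<bullet> rs \<le> w i \<bullet> r i"
    using r_opt rs_opt(1) \<open>i \<ge> 1\<close> by blast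
  then have gap_pos: "w i \<bullet> (r i - rs) > 0"
    using noterm \<open>eps > 0\<close> by (auto simp: inner_diff_right)
  have "w (Suc i) = alg_next (w i) (r i) rs"
    using step \<open>i \<ge> 1\<close> noterm by blast
  with alg_next_pos_unit[OF \<open>\<forall>k. w i $ k > 0\<close> gap_pos] show ?thesis by simp
qed

end
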